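(* Let $\{a_i,b_i\}$, $i\in\mathbb N_+$, be pairwise disjoint two-element subsets of $U$, and let $\mathcal D_2$ be the edge-independent probabilistic graph in which $E(a_i,b_i)$ and $E(b_i,a_i)$ have marginal probability $p_{a_i,b_i}=p_{b_i,a_i}=1/i^2$ for each $i$ and all other facts have marginal probability $0$. Then $\mathcal D_2\notin\mathsf{CQ}(\mathsf{BID})$.
   Context: Fix a countably infinite universe $U$ equipped with a linear order. Facts are $R(u_1,\dots,u_{\mathrm{ar}(R)})$ with $R$ from a finite schema and $u_i\in U$; instances are finite sets of facts; $\mathrm{adom}(D)$ is the set of elements of $U$ occurring in $D$. A probabilistic database (PDB) is a discrete probability space $(\mathbb D,P)$ with $\mathbb D$ a nonempty countable set of instances; its possible worlds are the instances of positive probability, and $\mathrm{facts}(\mathcal D)$ is their union. A graph database is an instance over a single binary relation $E$; it is simple if it has no fact $E(a,a)$ and undirected if $E(a,b)\in D$ implies $E(b,a)\in D$. An edge-independent probabilistic graph is a PDB all of whose possible worlds are simple undirected graph databases and such that for every sequence of pairwise distinct two-element subsets $\{a_1,b_1\},\dots,\{a_k,b_k\}$ of $U$ the events $E(a_i,b_i)\in D$ are independent; it is determined by the marginals $p_{a,b}=\Pr(E(a,b)\in D)$. A PDB $\mathcal I$ is block-independent disjoint ($\mathsf{BID}$) if $\mathrm{facts}(\mathcal I)$ can be partitioned into blocks such that facts $f_1,\dots,f_k$ from pairwise different blocks satisfy $\Pr(f_1\in I,\dots,f_k\in I)=\prod_i\Pr(f_i\in I)$ and distinct facts $f,f'$ of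 the same block satisfy $\Pr(f\in I\text{ and }f'\in I)=0$. A conjunctive query is a formula built from relational atoms $R(\bar u)$ ($\bar u$ variables or constants) and equality atoms using only $\exists,\wedge$, evaluated under active domain semantics; a CQ-view consists of one CQ $\Phi_R(x_1,\dots,x_{\mathrm{ar}(R)})$ per output relation $R$, mapping $D$ to the instance of all $R(\bar a)$ with $\bar a$ over $\mathrm{adom}(D)\cup\mathrm{adom}(\Phi_R)$ and $D\models\Phi_R[\bar a]$. The image of a PDB under a view is the push-forward distribution; $\mathsf{CQ}(\mathsf{BID})$ is the class of images of BID-PDBs under CQ-views. *)

theory Defs
  imports "HOL-Probability.Probability" "HOL-Library.Infinite_Typeclass"
    "HOL-Library.Countable" "HOL-Library.Disjoint_Sets"
begin

type_synonym ('r,'u) fact = "'r \<times> 'u list"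
type_synonym ('r,'u) inst = "('r,'u) fact set"

definition adom :: "('r,'u) inst \<Rightarrow> 'u set" where
  "adom D = (\<Union>(R,us)\<in>D. set us)"

definition is_instance :: "'r set \<Rightarrow> ('r \<Rightarrow> nat) \<Rightarrow> ('r,'u) inst \<Rightarrow> bool" where
  "is_instance sch ar D \<longleftrightarrow> finite D \<and> (\<forall>(R,us)\<in>D. R \<in> sch \<and> length us = ar R)"

definition is_pdb :: "'r set \<Rightarrow> ('r \<Rightarrow> nat) \<Rightarrow> ('r,'u) inst pmf \<Rightarrow> bool" where
  "is_pdb sch ar I \<longleftrightarrow> (\<forall>D\<in>set_pmf I. is_instance sch ar D)"

definition pdb_facts :: "('r,'u) inst pmf \<Rightarrow> ('r,'u) fact set" where
  "pdb_facts I = \<Union>(set_pmf I)"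

definition is_BID :: "'r set \<Rightarrow> ('r \<Rightarrow> nat) \<Rightarrow> ('r,'u) inst pmf \<Rightarrow> bool" where
  "is_BID sch ar I \<longleftrightarrow> is_pdb sch ar I \<and>
    (\<exists>B. partition_on (pdb_facts I) B \<and>
      (\<forall>fs. set fs \<subseteq> pdb_facts I \<and>
          (\<forall>i<length fs. \<forall>j<length fs. i \<noteq> j \<longrightarrow> \<not> (\<exists>X\<in>B. fs!i \<in> X \<and> fs!j \<in> X)) \<longrightarrow>
          measure_pmf.prob I {D. set fs \<subseteq> D}
            = prod_list (map (\<lambda>f. measure_pmf.prob I {D. f \<in> D}) fs)) \<and>
      (\<forall>X\<in>B. \<forall>f\<in>X. \<forall>f'\<in>X. f \<noteq> f' \<longrightarrow> measure_pmf.prob I {D. f \<in> D \<and> f' \<in> D} = 0))"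

datatype 'u cq_term = Var nat | Const 'u

datatype ('r,'u) cq =
    Atom 'r "'u cq_term list"
  | Eq "'u cq_term" "'u cq_term"
  | Conj "('r,'u) cq" "('r,'u) cq"
  | Exists nat "('r,'u) cq"

fun tval :: "(nat \<Rightarrow> 'u) \<Rightarrow> 'u cq_term \<Rightarrow> 'u" where
  "tval v (Var x) = v x"
| "tval v (Const c) = c"

fun cq_sat :: "('r,'u) inst \<Rightarrow> 'u set \<Rightarrow> ('r,'u) cq \<Rightarrow> (nat \<Rightarrow> 'u) \<Rightarrow> bool" where
  "cq_sat D Dom (Atom R ts) v \<longleftrightarrow> (R, map (tval v) ts) \<in> D"
| "cq_sat D Dom (Eq s t) v \<longleftrightarrow> tval v s = tval v t"
| "cq_sat D Dom (Conj \<phi> \<psi>) v \<longleftrightarrow> cq_sat D Dom \<phi> v \<and> cq_sat D Dom \<psi> v"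
| "cq_sat D Dom (Exists x \<phi>) v \<longleftrightarrow> (\<exists>c\<in>Dom. cq_sat D Dom \<phi> (v(x := c)))"

fun term_consts :: "'u cq_term \<Rightarrow> 'u set" where
  "term_consts (Var x) = {}"
| "term_consts (Const c) = {c}"

fun term_vars :: "'u cq_term \<Rightarrow> nat set" where
  "term_vars (Var x) = {x}"
| "term_vars (Const c) = {}"

fun cq_consts :: "('r,'u) cq \<Rightarrow> 'u set" where
  "cq_consts (Atom R ts) = (\<Union>t\<in>set ts. term_consts t)"
| "cq_consts (Eq s t) = term_consts s \<union> term_consts t"
| "cq_consts (Conj \<phi> \<psi>) = cq_consts \<phi> \<union> cq_consts \<psi>"
| "cq_consts (Exists x \<phi>) = cq_consts \<phi>"

fun cq_fv :: "('r,'u) cq \<Rightarrow> nat set" where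
  "cq_fv (Atom R ts) = (\<Union>t\<in>set ts. term_vars t)"
| "cq_fv (Eq s t) = term_vars s \<union> term_vars t"
| "cq_fv (Conj \<phi> \<psi>) = cq_fv \<phi> \<union> cq_fv \<psi>"
| "cq_fv (Exists x \<phi>) = cq_fv \<phi> - {x}"

fun cq_wf :: "'r set \<Rightarrow> ('r \<Rightarrow> nat) \<Rightarrow> ('r,'u) cq \<Rightarrow> bool" where
  "cq_wf sch ar (Atom R ts) \<longleftrightarrow> R \<in> sch \<and> length ts = ar R"
| "cq_wf sch ar (Eq s t) \<longleftrightarrow> True"
| "cq_wf sch ar (Conj \<phi> \<psi>) \<longleftrightarrow> cq_wf sch ar \<phi> \<and> cq_wf sch ar \<psi>"
| "cq_wf sch ar (Exists x \<phi>) \<longleftrightarrow> cq_wf sch ar \<phi>"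

text \<open>A CQ-view into the graph schema {E}: one CQ \<open>\<Phi>_E(x_1,x_2)\<close>, where the
  free variables x_1, x_2 are \<open>Var 0\<close>, \<open>Var 1\<close>. A graph database (instance over
  the single binary relation E) is represented by its set of pairs (a,b) with E(a,b).\<close>

definition is_CQ_view_E :: "'r set \<Rightarrow> ('r \<Rightarrow> nat) \<Rightarrow> ('r,'u) cq \<Rightarrow> bool" where
  "is_CQ_view_E sch ar \<Phi> \<longleftrightarrow> cq_wf sch ar \<Phi> \<and> cq_fv \<Phi> \<subseteq> {0, 1}"

definition cq_view_E :: "('r,'u) cq \<Rightarrow> ('r,'u) inst \<Rightarrow> ('u \<times> 'u) set" where
  "cq_view_E \<Phi> D =
     {(a, b). a \<in> adom D \<union> cq_consts \<Phi> \<and> b \<in> adom D \<union> cq_consts \<Phi> \<and>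
              cq_sat D (adom D \<union> cq_consts \<Phi>) \<Phi> ((\<lambda>_. undefined)(0 := a, 1 := b))}"

definition edge_indep_graph :: "('u \<times> 'u) set pmf \<Rightarrow> bool" where
  "edge_indep_graph G \<longleftrightarrow>
     (\<forall>D\<in>set_pmf G. finite D \<and> (\<forall>(a,b)\<in>D. a \<noteq> b \<and> (b,a) \<in> D)) \<and>
     (\<forall>ps. (\<forall>(a,b)\<in>set ps. a \<noteq> b) \<and> distinct (map (\<lambda>(a,b). {a,b}) ps) \<longrightarrow>
        measure_pmf.prob G {D. \<forall>p\<in>set ps. p \<in> D}
          = prod_list (map (\<lambda>p. measure_pmf.prob G {D. p \<in> D}) ps))"

end

theory Submission
  imports Defs "HOL-Analysis.Harmonic_Numbers"
begin

text \<open>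
  Suppose a CQ-view \<Phi>(x_1, x_2) of a BID-PDB had image D_2. The worlds of D_2 are loopless and
  symmetric, and the edge {a_1, b_1} is present with probability 1. Hence x_1 can neither be forced
  to a constant (both (a_1, b_1) and (b_1, a_1) are edges) nor lie in an equality class that can be
  reassigned freely (reassigning it to b_1 would produce the loop (b_1, b_1)). So x_1 is anchored:
  every edge (u, w) of the view needs a fact of the instance with u at a fixed position p.

  Distinct facts of a BID-PDB are negatively correlated. An event of probability P that needs a
  fact from each of two disjoint sets then forces the marginals of finitely many of these facts to
  sum to at least sqrt P; for the edges {a_i, b_i} this gives 1/i on pairwise disjoint sets of facts,
  so finite sums of marginals are unbounded. But under negative correlation the number of facts of
  a finite set F in a world concentrates around the sum of their marginals (Chebyshev), while
  worlds of bounded size carry positive mass; so these sums are bounded.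
\<close>

section \<open>Anchored, constant and unconstrained variables of conjunctive queries\<close>

lemma tval_cong: "(\<And>z. z \<in> term_vars t \<Longrightarrow> v z = w z) \<Longrightarrow> tval v t = tval w t"
  by (cases t) auto

lemma cq_sat_cong:
  "(\<And>z. z \<in> cq_fv \<phi> \<Longrightarrow> v z = w z) \<Longrightarrow> cq_sat D Dom \<phi> v = cq_sat D Dom \<phi> w"
proof (induction \<phi> arbitrary: v w)
  case (Atom R ts)
  then have "map (tval v) ts = map (tval w) ts"
    by (auto intro!: map_cong tval_cong)
  then show ?case by (simp only: cq_sat.simps)
next
  case (Eq s t)
  then show ?case using tval_cong[of s v w] tval_cong[of t v w] by auto
next
  case (Conj \<phi> \<psi>)
  then show ?case by (metis Un_iff cq_fv.simps(3) cq_sat.simps(3))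
next
  case (Exists x \<phi>)
  then have "cq_sat D Dom \<phi> (v(x := c)) = cq_sat D Dom \<phi> (w(x := c))" for c
    by (intro Exists.IH) auto
  then show ?case by simp
qed

lemma mem_term_vars_iff: "x \<in> term_vars t \<longleftrightarrow> t = Var x"
  by (cases t) auto

lemma finite_cq_fv: "finite (cq_fv \<phi>)"
proof -
  have "finite (term_vars t)" for t :: "'u cq_term" by (cases t) auto
  then show ?thesis by (induction \<phi>) auto
qed

definition facts_at :: "nat \<Rightarrow> 'u \<Rightarrow> ('r,'u) fact set" where
  "facts_at p u = {(R, us). p < length us \<and> us ! p = u}"

lemma disjoint_facts_at:
  "U \<inter> V = {} \<Longrightarrow> (\<Union>u\<in>U. facts_at p u) \<inter> (\<Union>v\<in>V. facts_at p v) = {}"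
  unfolding facts_at_def by auto

text \<open>Semantic counterparts of the three ways a variable x can occur in a CQ: at a fixed position p of
  a relational atom, in an equality class containing a constant, or in an equality class without
  atoms and constants, whose variables can then be reassigned simultaneously to any domain element.\<close>

definition anchored :: "('r,'u) cq \<Rightarrow> nat \<Rightarrow> bool" where
  "anchored \<phi> x \<longleftrightarrow> (\<exists>p. \<forall>D Dom v. cq_sat D Dom \<phi> v \<longrightarrow> D \<inter> facts_at p (v x) \<noteq> {})"

definition constant_var :: "('r,'u) cq \<Rightarrow> nat \<Rightarrow> bool" where
  "constant_var \<phi> x \<longleftrightarrow> (\<exists>c. \<forall>D Dom v. cq_sat D Dom \<phi> v \<longrightarrow> v x = c)"

definition forces_eq :: "('r,'u) cq \<Rightarrow> nat \<Rightarrow> nat \<Rightarrow> bool" where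
  "forces_eq \<phi> x y \<longleftrightarrow> (\<forall>D Dom v. cq_sat D Dom \<phi> v \<longrightarrow> v x = v y)"

definition eq_class :: "('r,'u) cq \<Rightarrow> nat \<Rightarrow> nat set" where
  "eq_class \<phi> x = {y \<in> insert x (cq_fv \<phi>). forces_eq \<phi> x y}"

lemma finite_eq_class: "finite (eq_class \<phi> x)"
  by (rule finite_subset[of _ "insert x (cq_fv \<phi>)"]) (auto simp: eq_class_def finite_cq_fv)

definition resettable :: "('r,'u) cq \<Rightarrow> nat set \<Rightarrow> bool" where
  "resettable \<phi> Y \<longleftrightarrow>
     (\<forall>D Dom v c. c \<in> Dom \<longrightarrow> cq_sat D Dom \<phi> v \<longrightarrow> cq_sat D Dom \<phi> (override_on v (\<lambda>_. c) Y))"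

definition unconstrained :: "('r,'u) cq \<Rightarrow> nat \<Rightarrow> bool" where
  "unconstrained \<phi> x \<longleftrightarrow> (\<exists>Y. x \<in> Y \<and> Y \<subseteq> eq_class \<phi> x \<and> resettable \<phi> Y)"

lemma resettableD:
  "resettable \<phi> Y \<Longrightarrow> c \<in> Dom \<Longrightarrow> cq_sat D Dom \<phi> v \<Longrightarrow> cq_sat D Dom \<phi> (override_on v (\<lambda>_. c) Y)"
  unfolding resettable_def by blast

lemma resettable_if_disjoint_fv:
  assumes "Y \<inter> cq_fv \<phi> = {}"
  shows "resettable \<phi> Y"
proof (unfold resettable_def, intro allI impI)
  fix D Dom v c
  assume "cq_sat D Dom \<phi> v"
  moreover have "override_on v (\<lambda>_. c) Y z = v z" if "z \<in> cq_fv \<phi>" for z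
    using assms that by (auto simp: override_on_def)
  ultimately show "cq_sat D Dom \<phi> (override_on v (\<lambda>_. c) Y)"
    using cq_sat_cong[of \<phi> "override_on v (\<lambda>_. c) Y" v D Dom] by blast
qed

lemma eq_class_self: "x \<in> eq_class \<phi> x"
  unfolding eq_class_def forces_eq_def by simp

lemma unconstrained_if_not_fv:
  assumes "x \<notin> cq_fv \<phi>"
  shows "unconstrained \<phi> x"
proof -
  have "resettable \<phi> {x}" using assms by (intro resettable_if_disjoint_fv) auto
  then show ?thesis unfolding unconstrained_def using eq_class_self by blast
qed

lemma resettable_Un:
  assumes "resettable \<phi> A" and "resettable \<phi> B"
  shows "resettable \<phi> (A \<union> B)"
proof (unfold resettable_def, intro allI impI)
  fix D Dom v c assume "c \<in> Dom" "cq_sat D Dom \<phi> v"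
  then have "cq_sat D Dom \<phi> (override_on (override_on v (\<lambda>_. c) A) (\<lambda>_. c) B)"
    using resettableD[OF assms(1)] resettableD[OF assms(2)] by blast
  moreover have "override_on (override_on v (\<lambda>_. c) A) (\<lambda>_. c) B = override_on v (\<lambda>_. c) (A \<union> B)"
    by (auto simp: override_on_def)
  ultimately show "cq_sat D Dom \<phi> (override_on v (\<lambda>_. c) (A \<union> B))" by simp
qed

lemma resettable_UN:
  "finite K \<Longrightarrow> (\<forall>y\<in>K. resettable \<phi> (Y y)) \<Longrightarrow> resettable \<phi> (\<Union>y\<in>K. Y y)"
  by (induction K rule: finite_induct) (auto simp: resettable_def[of _ "{}"] intro: resettable_Un)

lemma resettable_cover:
  assumes "finite K" and "\<forall>y\<in>K. \<exists>Y. y \<in> Y \<and> Y \<subseteq> K \<and> resettable \<phi> Y"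
  shows "resettable \<phi> K"
proof -
  obtain Y where Y: "\<forall>y\<in>K. y \<in> Y y \<and> Y y \<subseteq> K \<and> resettable \<phi> (Y y)"
    using assms(2) by metis
  have "resettable \<phi> (\<Union>y\<in>K. Y y)"
    using resettable_UN[OF assms(1)] Y by blast
  moreover have "(\<Union>y\<in>K. Y y) = K" using Y by blast
  ultimately show ?thesis by simp
qed

lemma anchored_transfer:
  assumes "\<And>D Dom v. cq_sat D Dom \<phi>' v \<Longrightarrow> \<exists>w. cq_sat D Dom \<phi> w \<and> w y = v x"
    and "anchored \<phi> y"
  shows "anchored \<phi>' x"
proof -
  obtain p where p: "\<forall>D Dom w. cq_sat D Dom \<phi> w \<longrightarrow> D \<inter> facts_at p (w y) \<noteq> {}"
    using assms(2) unfolding anchored_def by blast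
  have "D \<inter> facts_at p (v x) \<noteq> {}" if sat: "cq_sat D Dom \<phi>' v" for D Dom v
  proof -
    obtain w where "cq_sat D Dom \<phi> w" "w y = v x" using assms(1)[OF sat] by blast
    then have "D \<inter> facts_at p (w y) \<noteq> {}" using p by blast
    then show ?thesis using \<open>w y = v x\<close> by simp
  qed
  then show ?thesis unfolding anchored_def by blast
qed

lemma constant_var_transfer:
  assumes "\<And>D Dom v. cq_sat D Dom \<phi>' v \<Longrightarrow> \<exists>w. cq_sat D Dom \<phi> w \<and> w y = v x"
    and "constant_var \<phi> y"
  shows "constant_var \<phi>' x"
proof -
  obtain c where c: "\<forall>D Dom w. cq_sat D Dom \<phi> w \<longrightarrow> w y = c"
    using assms(2) unfolding constant_var_def by blast
  have "v x = c" if sat: "cq_sat D Dom \<phi>' v" for D Dom v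
  proof -
    obtain w where "cq_sat D Dom \<phi> w" "w y = v x" using assms(1)[OF sat] by blast
    then show ?thesis using c by metis
  qed
  then show ?thesis unfolding constant_var_def by blast
qed

lemma forces_eq_trans:
  assumes "forces_eq \<phi> x y" and "forces_eq \<phi> y z"
  shows "forces_eq \<phi> x z"
proof (unfold forces_eq_def, intro allI impI)
  fix D Dom v assume "cq_sat D Dom \<phi> v"
  then have "v x = v y" "v y = v z" using assms unfolding forces_eq_def by blast+
  then show "v x = v z" by simp
qed

lemma forces_eq_Conj:
  assumes "forces_eq \<phi>\<^sub>1 x y \<or> forces_eq \<phi>\<^sub>2 x y"
  shows "forces_eq (Conj \<phi>\<^sub>1 \<phi>\<^sub>2) x y"
proof (unfold forces_eq_def, intro allI impI)
  fix D Dom v assume "cq_sat D Dom (Conj \<phi>\<^sub>1 \<phi>\<^sub>2) v"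
  then have "cq_sat D Dom \<phi>\<^sub>1 v" "cq_sat D Dom \<phi>\<^sub>2 v" by simp_all
  then show "v x = v y" using assms unfolding forces_eq_def by blast
qed

lemma eq_class_Conj_subset:
  assumes y: "y \<in> eq_class (Conj \<phi>\<^sub>1 \<phi>\<^sub>2) x" and \<phi>: "\<phi> = \<phi>\<^sub>1 \<or> \<phi> = \<phi>\<^sub>2"
  shows "eq_class \<phi> y \<subseteq> eq_class (Conj \<phi>\<^sub>1 \<phi>\<^sub>2) x"
proof
  fix z assume z: "z \<in> eq_class \<phi> y"
  have "cq_fv \<phi> \<subseteq> cq_fv (Conj \<phi>\<^sub>1 \<phi>\<^sub>2)" using \<phi> by auto
  then have "z \<in> insert x (cq_fv (Conj \<phi>\<^sub>1 \<phi>\<^sub>2))"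
    using y z unfolding eq_class_def by blast
  moreover have "forces_eq (Conj \<phi>\<^sub>1 \<phi>\<^sub>2) x z"
  proof (rule forces_eq_trans)
    show "forces_eq (Conj \<phi>\<^sub>1 \<phi>\<^sub>2) x y" using y unfolding eq_class_def by blast
    show "forces_eq (Conj \<phi>\<^sub>1 \<phi>\<^sub>2) y z"
      using z \<phi> unfolding eq_class_def by (blast intro: forces_eq_Conj)
  qed
  ultimately show "z \<in> eq_class (Conj \<phi>\<^sub>1 \<phi>\<^sub>2) x"
    unfolding eq_class_def by blast
qed

lemma resettable_Conj:
  "resettable \<phi>\<^sub>1 Y \<Longrightarrow> resettable \<phi>\<^sub>2 Y \<Longrightarrow> resettable (Conj \<phi>\<^sub>1 \<phi>\<^sub>2) Y"
  unfolding resettable_def by simp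

lemma unconstrained_Conj:
  assumes "\<forall>y\<in>eq_class (Conj \<phi>\<^sub>1 \<phi>\<^sub>2) x. unconstrained \<phi>\<^sub>1 y \<and> unconstrained \<phi>\<^sub>2 y"
  shows "unconstrained (Conj \<phi>\<^sub>1 \<phi>\<^sub>2) x"
proof -
  let ?K = "eq_class (Conj \<phi>\<^sub>1 \<phi>\<^sub>2) x"
  have "resettable \<phi> ?K" if \<phi>: "\<phi> = \<phi>\<^sub>1 \<or> \<phi> = \<phi>\<^sub>2" for \<phi>
  proof (rule resettable_cover[OF finite_eq_class], intro ballI)
    fix y assume "y \<in> ?K"
    then have "unconstrained \<phi> y" using assms \<phi> by blast
    then obtain Y where "y \<in> Y" "Y \<subseteq> eq_class \<phi> y" "resettable \<phi> Y"
      unfolding unconstrained_def by blast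
    moreover have "Y \<subseteq> ?K"
      using \<open>Y \<subseteq> eq_class \<phi> y\<close> eq_class_Conj_subset[OF \<open>y \<in> ?K\<close> \<phi>] by (rule order_trans)
    ultimately show "\<exists>Y. y \<in> Y \<and> Y \<subseteq> ?K \<and> resettable \<phi> Y" by blast
  qed
  then have "resettable (Conj \<phi>\<^sub>1 \<phi>\<^sub>2) ?K" by (simp add: resettable_Conj)
  then show ?thesis
    unfolding unconstrained_def using eq_class_self by (intro exI[of _ ?K]) simp
qed

lemma resettable_Exists:
  assumes "resettable \<psi> Y"
  shows "resettable (Exists z \<psi>) (Y - {z})"
proof (unfold resettable_def, intro allI impI)
  fix D Dom v c assume "c \<in> Dom" and "cq_sat D Dom (Exists z \<psi>) v"
  then obtain d where "d \<in> Dom" and sat: "cq_sat D Dom \<psi> (v(z := d))" by auto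
  define e where "e = (if z \<in> Y then c else d)"
  have "override_on (v(z := d)) (\<lambda>_. c) Y = (override_on v (\<lambda>_. c) (Y - {z}))(z := e)"
    unfolding e_def by (rule ext) (simp add: override_on_def)
  then have "cq_sat D Dom \<psi> ((override_on v (\<lambda>_. c) (Y - {z}))(z := e))"
    using resettableD[OF assms \<open>c \<in> Dom\<close> sat] by simp
  moreover have "e \<in> Dom" using \<open>c \<in> Dom\<close> \<open>d \<in> Dom\<close> unfolding e_def by simp
  ultimately show "cq_sat D Dom (Exists z \<psi>) (override_on v (\<lambda>_. c) (Y - {z}))"
    by auto
qed

lemma forces_eq_Exists:
  assumes "forces_eq \<psi> x y" and "x \<noteq> z" and "y \<noteq> z"
  shows "forces_eq (Exists z \<psi>) x y"
proof (unfold forces_eq_def, intro allI impI)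
  fix D Dom v assume "cq_sat D Dom (Exists z \<psi>) v"
  then obtain c where "cq_sat D Dom \<psi> (v(z := c))" by auto
  then have "(v(z := c)) x = (v(z := c)) y" using assms(1) unfolding forces_eq_def by blast
  then show "v x = v y" using assms(2,3) by simp
qed

lemma eq_class_Exists_subset:
  assumes "x \<noteq> z"
  shows "eq_class \<psi> x - {z} \<subseteq> eq_class (Exists z \<psi>) x"
proof
  fix y assume "y \<in> eq_class \<psi> x - {z}"
  then have "y \<in> insert x (cq_fv \<psi>)" "forces_eq \<psi> x y" "y \<noteq> z"
    unfolding eq_class_def by auto
  then have "y \<in> insert x (cq_fv (Exists z \<psi>))" by auto
  moreover have "forces_eq (Exists z \<psi>) x y"
    using forces_eq_Exists[OF \<open>forces_eq \<psi> x y\<close> assms \<open>y \<noteq> z\<close>] .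
  ultimately show "y \<in> eq_class (Exists z \<psi>) x" unfolding eq_class_def by blast
qed

lemma unconstrained_Exists:
  assumes "x \<noteq> z" and "unconstrained \<psi> x"
  shows "unconstrained (Exists z \<psi>) x"
proof -
  obtain Y where "x \<in> Y" "Y \<subseteq> eq_class \<psi> x" "resettable \<psi> Y"
    using assms(2) unfolding unconstrained_def by blast
  then have "x \<in> Y - {z}" "Y - {z} \<subseteq> eq_class (Exists z \<psi>) x"
      "resettable (Exists z \<psi>) (Y - {z})"
    using assms(1) eq_class_Exists_subset[OF assms(1), of \<psi>] resettable_Exists[of \<psi> Y z]
    by auto
  then show ?thesis unfolding unconstrained_def by (intro exI[of _ "Y - {z}"]) simp
qed

lemma unconstrained_Eq_Var:
  assumes "x \<in> {y\<^sub>1, y\<^sub>2}"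
  shows "unconstrained (Eq (Var y\<^sub>1) (Var y\<^sub>2) :: ('r,'u) cq) x"
proof -
  let ?e = "Eq (Var y\<^sub>1) (Var y\<^sub>2) :: ('r,'u) cq"
  have "forces_eq ?e x y" if "y \<in> {y\<^sub>1, y\<^sub>2}" for y
  proof (unfold forces_eq_def, intro allI impI)
    fix D Dom v assume "cq_sat D Dom ?e v"
    then have "v y\<^sub>1 = v y\<^sub>2" by simp
    then show "v x = v y" using assms that by auto
  qed
  moreover have "cq_fv ?e = {y\<^sub>1, y\<^sub>2}" by auto
  ultimately have "{y\<^sub>1, y\<^sub>2} \<subseteq> eq_class ?e x"
    unfolding eq_class_def by blast
  moreover have "resettable ?e {y\<^sub>1, y\<^sub>2}"
    unfolding resettable_def by simp
  ultimately show ?thesis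
    using assms unfolding unconstrained_def by (intro exI[of _ "{y\<^sub>1, y\<^sub>2}"]) simp
qed

lemma anchored_or_constant_or_unconstrained_Atom:
  "anchored (Atom R ts) x \<or> constant_var (Atom R ts) x \<or> unconstrained (Atom R ts) x"
proof (cases "Var x \<in> set ts")
  case True
  then obtain p where "p < length ts" "ts ! p = Var x" by (metis in_set_conv_nth)
  then have "(R, map (tval v) ts) \<in> facts_at p (v x)" for v
    unfolding facts_at_def by simp
  then have "anchored (Atom R ts) x"
    unfolding anchored_def by (intro exI[of _ p] allI impI) auto
  then show ?thesis by blast
next
  case False
  then have "x \<notin> cq_fv (Atom R ts)" by (auto simp: mem_term_vars_iff)
  then show ?thesis using unconstrained_if_not_fv by blast
qed

lemma anchored_or_constant_or_unconstrained_Eq: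
  fixes s t :: "'u cq_term"
  defines "e \<equiv> Eq s t :: ('r,'u) cq"
  shows "anchored e x \<or> constant_var e x \<or> unconstrained e x"
proof (cases "x \<in> cq_fv e")
  case False
  then show ?thesis using unconstrained_if_not_fv by blast
next
  case True
  show ?thesis
  proof (cases "\<exists>c. Const c \<in> {s, t}")
    case True
    then obtain c where "s = Var x \<and> t = Const c \<or> s = Const c \<and> t = Var x"
      using \<open>x \<in> cq_fv e\<close> unfolding e_def by (cases s; cases t) auto
    then have "constant_var e x"
      unfolding constant_var_def e_def by (intro exI[of _ c]) auto
    then show ?thesis by blast
  next
    case False
    then obtain y\<^sub>1 y\<^sub>2 where "s = Var y\<^sub>1" "t = Var y\<^sub>2" by (cases s; cases t) auto
    then show ?thesis using True unconstrained_Eq_Var unfolding e_def by auto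
  qed
qed

text \<open>In a conjunction, a variable becomes anchored or constant as soon as some variable of its
  equality class is so in one of the conjuncts; otherwise the whole class can be reset in both.\<close>

lemma anchored_or_constant_or_unconstrained_Conj:
  assumes IH: "\<And>y. anchored \<phi>\<^sub>1 y \<or> constant_var \<phi>\<^sub>1 y \<or> unconstrained \<phi>\<^sub>1 y"
    "\<And>y. anchored \<phi>\<^sub>2 y \<or> constant_var \<phi>\<^sub>2 y \<or> unconstrained \<phi>\<^sub>2 y"
  shows "anchored (Conj \<phi>\<^sub>1 \<phi>\<^sub>2) x \<or> constant_var (Conj \<phi>\<^sub>1 \<phi>\<^sub>2) x \<or> unconstrained (Conj \<phi>\<^sub>1 \<phi>\<^sub>2) x"
proof -
  let ?K = "eq_class (Conj \<phi>\<^sub>1 \<phi>\<^sub>2) x"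
  show ?thesis
  proof (cases "\<exists>y\<in>?K. \<exists>\<phi>\<in>{\<phi>\<^sub>1, \<phi>\<^sub>2}. anchored \<phi> y \<or> constant_var \<phi> y")
    case True
    then obtain y \<phi> where y: "y \<in> ?K" and \<phi>: "\<phi> = \<phi>\<^sub>1 \<or> \<phi> = \<phi>\<^sub>2"
      and "anchored \<phi> y \<or> constant_var \<phi> y"
      by blast
    have "\<exists>w. cq_sat D Dom \<phi> w \<and> w y = v x" if sat: "cq_sat D Dom (Conj \<phi>\<^sub>1 \<phi>\<^sub>2) v" for D Dom v
    proof (intro exI conjI)
      show "cq_sat D Dom \<phi> v" using \<phi> sat by auto
      have "forces_eq (Conj \<phi>\<^sub>1 \<phi>\<^sub>2) x y" using y unfolding eq_class_def by blast
      then show "v y = v x" using sat unfolding forces_eq_def by metis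
    qed
    with \<open>anchored \<phi> y \<or> constant_var \<phi> y\<close> show ?thesis
      using anchored_transfer[of "Conj \<phi>\<^sub>1 \<phi>\<^sub>2" \<phi> y x] constant_var_transfer[of "Conj \<phi>\<^sub>1 \<phi>\<^sub>2" \<phi> y x]
      by blast
  next
    case False
    have "unconstrained \<phi>\<^sub>1 y \<and> unconstrained \<phi>\<^sub>2 y" if "y \<in> ?K" for y
      using False that IH(1)[of y] IH(2)[of y] by blast
    then show ?thesis using unconstrained_Conj by blast
  qed
qed

lemma anchored_or_constant_or_unconstrained_Exists:
  assumes IH: "anchored \<psi> x \<or> constant_var \<psi> x \<or> unconstrained \<psi> x"
  shows "anchored (Exists z \<psi>) x \<or> constant_var (Exists z \<psi>) x \<or> unconstrained (Exists z \<psi>) x"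
proof (cases "x = z")
  case True
  then have "x \<notin> cq_fv (Exists z \<psi>)" by simp
  then show ?thesis using unconstrained_if_not_fv by blast
next
  case False
  have "\<exists>w. cq_sat D Dom \<psi> w \<and> w x = v x" if "cq_sat D Dom (Exists z \<psi>) v" for D Dom v
    using that False by auto
  with IH show ?thesis
    using anchored_transfer[of "Exists z \<psi>" \<psi> x x] constant_var_transfer[of "Exists z \<psi>" \<psi> x x]
      unconstrained_Exists[OF False] by blast
qed

theorem anchored_or_constant_or_unconstrained:
  "anchored \<phi> x \<or> constant_var \<phi> x \<or> unconstrained \<phi> x"
proof (induction \<phi> arbitrary: x)
  case (Atom R ts)
  show ?case by (rule anchored_or_constant_or_unconstrained_Atom)
next
  case (Eq s t)
  show ?case by (rule anchored_or_constant_or_unconstrained_Eq)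
next
  case (Conj \<phi>\<^sub>1 \<phi>\<^sub>2)
  then show ?case by (rule anchored_or_constant_or_unconstrained_Conj)
next
  case (Exists z \<psi>)
  then show ?case by (rule anchored_or_constant_or_unconstrained_Exists)
qed

section \<open>Marginal sums under negative correlation\<close>

lemma measure_pmf_finite_subset_approx:
  fixes M :: "'a pmf"
  assumes "e > 0"
  obtains W where "finite W" "W \<subseteq> A \<inter> set_pmf M" "measure_pmf.prob M W > measure_pmf.prob M A - e"
proof -
  let ?A = "A \<inter> set_pmf M"
  have "measure_pmf.prob M A = infsetsum (pmf M) ?A"
    using measure_Int_set_pmf measure_pmf_conv_infsetsum by metis
  also have "\<dots> = infsum (pmf M) ?A"
    by (rule infsetsum_infsum[OF pmf_abs_summable])
  moreover have "pmf M summable_on ?A"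
    using abs_summable_summable abs_summable_equivalent pmf_abs_summable by blast
  ultimately have "(sum (pmf M) \<longlongrightarrow> measure_pmf.prob M A) (finite_subsets_at_top ?A)"
    using has_sum_infsum unfolding has_sum_def by metis
  then have "eventually (\<lambda>W. dist (sum (pmf M) W) (measure_pmf.prob M A) < e) (finite_subsets_at_top ?A)"
    using assms tendstoD by blast
  then obtain W where W: "finite W" "W \<subseteq> ?A" "dist (sum (pmf M) W) (measure_pmf.prob M A) < e"
    unfolding eventually_finite_subsets_at_top by blast
  moreover have "measure_pmf.prob M W = sum (pmf M) W" using W(1) measure_measure_pmf_finite by blast
  ultimately show ?thesis using that unfolding dist_real_def by auto
qed

lemma measure_pmf_integrable_bounded:
  fixes h :: "'a \<Rightarrow> real"
  shows "(\<And>x. \<bar>h x\<bar> \<le> B) \<Longrightarrow> integrable (measure_pmf M) h"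
  by (rule measure_pmf.integrable_const_bound[where B = B]) auto

definition marginal :: "'f set pmf \<Rightarrow> 'f \<Rightarrow> real" where
  "marginal M f = measure_pmf.prob M {D. f \<in> D}"

definition negatively_correlated :: "'f set pmf \<Rightarrow> bool" where
  "negatively_correlated M \<longleftrightarrow>
     (\<forall>f g. f \<noteq> g \<longrightarrow> measure_pmf.prob M {D. f \<in> D \<and> g \<in> D} \<le> marginal M f * marginal M g)"

lemma marginal_nonneg: "marginal M f \<ge> 0"
  unfolding marginal_def by simp

lemma card_Int_eq_sum_indicator:
  assumes "finite F"
  shows "real (card (D \<inter> F)) = (\<Sum>f\<in>F. indicator {D. f \<in> D} D)"
proof -
  have "(\<Sum>f\<in>F. indicator {D. f \<in> D} D) = (\<Sum>f\<in>F \<inter> D. 1 :: real)"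
    using sum.inter_restrict[OF assms, of "\<lambda>_. 1 :: real" D] by (simp add: indicator_def of_bool_def)
  then show ?thesis by (simp add: Int_commute)
qed

lemma expectation_card_Int:
  assumes "finite F"
  shows "measure_pmf.expectation M (\<lambda>D. real (card (D \<inter> F))) = sum (marginal M) F"
proof -
  note card_Int_eq_sum_indicator[OF assms]
  moreover have "integrable (measure_pmf M) (indicator {D. f \<in> D} :: _ \<Rightarrow> real)" for f
    by (rule measure_pmf_integrable_bounded[where B = 1]) (simp add: indicator_def)
  ultimately show ?thesis unfolding marginal_def by simp
qed

lemma expectation_card_Int_square_le:
  assumes neg: "negatively_correlated M" and "finite F"
  shows "measure_pmf.expectation M (\<lambda>D. real (card (D \<inter> F))^2)
      \<le> sum (marginal M) F + (sum (marginal M) F)^2"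
proof -
  let ?q = "\<lambda>f g. measure_pmf.prob M {D. f \<in> D \<and> g \<in> D}"
  have "real (card (D \<inter> F))^2 = (\<Sum>f\<in>F. \<Sum>g\<in>F. indicator {D. f \<in> D \<and> g \<in> D} D)" for D
  proof -
    have "real (card (D \<inter> F))^2
        = (\<Sum>f\<in>F. indicator {D. f \<in> D} D) * (\<Sum>g\<in>F. indicator {D. g \<in> D} D)"
      unfolding card_Int_eq_sum_indicator[OF \<open>finite F\<close>] power2_eq_square ..
    also have "\<dots> = (\<Sum>f\<in>F. \<Sum>g\<in>F. indicator {D. f \<in> D} D * indicator {D. g \<in> D} D)"
      by (rule sum_product)
    finally show ?thesis by (simp add: indicator_def of_bool_conj)
  qed
  moreover have "integrable (measure_pmf M) (indicator {D. f \<in> D \<and> g \<in> D} :: _ \<Rightarrow> real)" for f g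
    by (rule measure_pmf_integrable_bounded[where B = 1]) (simp add: indicator_def)
  ultimately have "measure_pmf.expectation M (\<lambda>D. real (card (D \<inter> F))^2) = (\<Sum>f\<in>F. \<Sum>g\<in>F. ?q f g)"
    by (simp add: Bochner_Integration.integral_sum Bochner_Integration.integrable_sum)
  also have "\<dots> \<le> (\<Sum>f\<in>F. \<Sum>g\<in>F. (if f = g then marginal M f else 0) + marginal M f * marginal M g)"
  proof (intro sum_mono)
    fix f g
    show "?q f g \<le> (if f = g then marginal M f else 0) + marginal M f * marginal M g"
      using neg marginal_nonneg[of M f] marginal_nonneg[of M g]
      unfolding negatively_correlated_def by (cases "f = g") (auto simp: marginal_def)
  qed
  also have "\<dots> = sum (marginal M) F + (sum (marginal M) F)^2"
    using \<open>finite F\<close>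
    by (simp add: sum.distrib sum_product power2_eq_square)
  finally show ?thesis .
qed

lemma prob_card_Int_less_half_mean:
  assumes neg: "negatively_correlated M" and "finite F" and pos: "sum (marginal M) F > 0"
  shows "measure_pmf.prob M {D. real (card (D \<inter> F)) < sum (marginal M) F / 2}
      \<le> 4 / sum (marginal M) F"
proof -
  define \<mu> where "\<mu> = sum (marginal M) F"
  define X where "X D = real (card (D \<inter> F))" for D
  have bounded: "\<bar>X D\<bar> \<le> real (card F)" for D
    using card_mono[OF \<open>finite F\<close>, of "D \<inter> F"] unfolding X_def by simp
  have "integrable (measure_pmf M) X"
    using bounded by (rule measure_pmf_integrable_bounded)
  moreover have "\<bar>X D ^ 2\<bar> \<le> real (card F) ^ 2" for D
    using power_mono[OF bounded[of D], of 2] by simp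
  then have X2: "integrable (measure_pmf M) (\<lambda>D. X D ^ 2)"
    by (rule measure_pmf_integrable_bounded)
  moreover have EX: "measure_pmf.expectation M X = \<mu>"
    unfolding X_def \<mu>_def using expectation_card_Int[OF \<open>finite F\<close>] .
  ultimately have "measure_pmf.variance M X
      = measure_pmf.expectation M (\<lambda>D. X D ^ 2) - \<mu>^2"
    using measure_pmf.variance_eq by metis
  then have "measure_pmf.variance M X \<le> \<mu>"
    using expectation_card_Int_square_le[OF neg \<open>finite F\<close>] unfolding X_def \<mu>_def by simp
  have "{D. X D < \<mu> / 2} \<subseteq> {D \<in> space (measure_pmf M). \<bar>X D - measure_pmf.expectation M X\<bar> \<ge> \<mu> / 2}"
    using EX by (auto simp: abs_if)
  then have "measure_pmf.prob M {D. X D < \<mu> / 2}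
      \<le> measure_pmf.prob M {D \<in> space (measure_pmf M). \<bar>X D - measure_pmf.expectation M X\<bar> \<ge> \<mu> / 2}"
    by (rule measure_pmf.finite_measure_mono) simp
  also have "\<dots> \<le> measure_pmf.variance M X / (\<mu> / 2)^2"
    using pos X2 unfolding \<mu>_def by (intro measure_pmf.Chebyshev_inequality) auto
  also have "\<dots> \<le> \<mu> / (\<mu> / 2)^2"
    using \<open>measure_pmf.variance M X \<le> \<mu>\<close> by (intro divide_right_mono) auto
  also have "\<dots> = 4 / \<mu>"
    using pos unfolding \<mu>_def by (simp add: power2_eq_square field_simps)
  finally show ?thesis unfolding X_def \<mu>_def .
qed

text \<open>Finitely many worlds, each of size at most some m, have total probability above 1/2; each of
  them has fewer than \<mu>/2 facts of F once \<mu> > 2m, yet by Chebyshev this has probability at most 4/\<mu>.\<close>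

lemma negatively_correlated_marginal_sums_bounded:
  assumes fin: "\<forall>D\<in>set_pmf M. finite D" and neg: "negatively_correlated M"
  obtains C where "\<And>F. finite F \<Longrightarrow> sum (marginal M) F \<le> C"
proof -
  obtain W where W: "finite W" "W \<subseteq> set_pmf M" "measure_pmf.prob M W > 1 / 2"
    using measure_pmf_finite_subset_approx[of "1 / 2" UNIV M] by auto
  define m where "m = (\<Sum>D\<in>W. card D)"
  have "sum (marginal M) F \<le> 8 + 2 * real m" if "finite F" for F
  proof (rule ccontr)
    define \<mu> where "\<mu> = sum (marginal M) F"
    assume "\<not> sum (marginal M) F \<le> 8 + 2 * real m"
    then have \<mu>: "\<mu> > 8 + 2 * real m" unfolding \<mu>_def by simp
    have "real (card (D \<inter> F)) < \<mu> / 2" if "D \<in> W" for D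
    proof -
      have "card (D \<inter> F) \<le> card D" using fin W(2) that by (intro card_mono) auto
      also have "\<dots> \<le> m" unfolding m_def by (rule member_le_sum[OF that _ W(1)]) simp
      finally show ?thesis using \<mu> by simp
    qed
    then have "measure_pmf.prob M W \<le> measure_pmf.prob M {D. real (card (D \<inter> F)) < \<mu> / 2}"
      by (intro measure_pmf.finite_measure_mono) auto
    also have "\<dots> \<le> 4 / \<mu>"
      using prob_card_Int_less_half_mean[OF neg \<open>finite F\<close>] \<mu> unfolding \<mu>_def by simp
    also have "\<dots> < 1 / 2" using \<mu> by (simp add: field_simps)
    finally show False using W(3) by simp
  qed
  then show ?thesis using that by blast
qed

lemma prob_meets_both_le_marginal_product:
  assumes neg: "negatively_correlated M" and "finite A" "finite B" "A \<inter> B = {}"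
    and meets: "\<forall>D\<in>W. D \<inter> A \<noteq> {} \<and> D \<inter> B \<noteq> {}"
  shows "measure_pmf.prob M W \<le> sum (marginal M) A * sum (marginal M) B"
proof -
  let ?both = "\<lambda>fg. {D. fst fg \<in> D \<and> snd fg \<in> D}"
  have "W \<subseteq> (\<Union>fg\<in>A \<times> B. ?both fg)"
    using meets by fastforce
  then have "measure_pmf.prob M W \<le> measure_pmf.prob M (\<Union>fg\<in>A \<times> B. ?both fg)"
    by (intro measure_pmf.finite_measure_mono) auto
  also have "\<dots> \<le> (\<Sum>fg\<in>A \<times> B. measure_pmf.prob M (?both fg))"
    using \<open>finite A\<close> \<open>finite B\<close> by (intro measure_pmf.finite_measure_subadditive_finite) auto
  also have "\<dots> \<le> (\<Sum>fg\<in>A \<times> B. marginal M (fst fg) * marginal M (snd fg))"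
    using neg \<open>A \<inter> B = {}\<close> unfolding negatively_correlated_def
    by (intro sum_mono) (metis IntI SigmaE empty_iff prod.sel)
  also have "\<dots> = sum (marginal M) A * sum (marginal M) B"
    by (simp add: sum.cartesian_product' sum_product)
  finally show ?thesis .
qed

lemma sqrt_prob_le_marginal_sum:
  assumes fin: "\<forall>D\<in>set_pmf M. finite D" and neg: "negatively_correlated M"
    and "A \<inter> B = {}" and meets: "\<forall>D\<in>set_pmf M \<inter> E. D \<inter> A \<noteq> {} \<and> D \<inter> B \<noteq> {}"
  obtains F where "F \<subseteq> A \<union> B" "finite F" "sqrt (measure_pmf.prob M E) \<le> sum (marginal M) F"
proof (cases "measure_pmf.prob M E = 0")
  case True
  then show ?thesis using that[of "{}"] by simp
next
  case False
  let ?P = "measure_pmf.prob M E"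
  obtain W where W: "finite W" "W \<subseteq> E \<inter> set_pmf M" "measure_pmf.prob M W > ?P - 3 / 4 * ?P"
    using False measure_pmf_finite_subset_approx[of "3 / 4 * ?P" E M]
    by (metis measure_nonneg order_le_less zero_less_mult_iff zero_less_divide_iff zero_less_numeral)
  have "finite (\<Union>W)" using W fin by auto
  define A' where "A' = A \<inter> \<Union>W"
  define B' where "B' = B \<inter> \<Union>W"
  have "finite A'" "finite B'" unfolding A'_def B'_def using \<open>finite (\<Union>W)\<close> by auto
  moreover have "A' \<inter> B' = {}" using \<open>A \<inter> B = {}\<close> unfolding A'_def B'_def by blast
  moreover have "\<forall>D\<in>W. D \<inter> A' \<noteq> {} \<and> D \<inter> B' \<noteq> {}"
    using meets W(2) unfolding A'_def B'_def by blast
  ultimately have "measure_pmf.prob M W \<le> sum (marginal M) A' * sum (marginal M) B'"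
    by (rule prob_meets_both_le_marginal_product[OF neg])
  then have "?P \<le> 4 * (sum (marginal M) A' * sum (marginal M) B')" using W(3) by linarith
  also have "\<dots> \<le> (sum (marginal M) A' + sum (marginal M) B')^2"
    using sum_squares_ge_zero[of "sum (marginal M) A' - sum (marginal M) B'" 0]
    by (simp add: power2_eq_square algebra_simps)
  finally have "sqrt ?P \<le> sum (marginal M) A' + sum (marginal M) B'"
    by (intro real_le_lsqrt add_nonneg_nonneg sum_nonneg marginal_nonneg)
  also have "\<dots> = sum (marginal M) (A' \<union> B')"
    using \<open>finite A'\<close> \<open>finite B'\<close> \<open>A' \<inter> B' = {}\<close> by (rule sum.union_disjoint[symmetric])
  finally show ?thesis
    using that[of "A' \<union> B'"] \<open>finite A'\<close> \<open>finite B'\<close> unfolding A'_def B'_def by auto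
qed

lemma sqrt_pair_event_probs_bounded:
  assumes fin: "\<forall>D\<in>set_pmf M. finite D" and neg: "negatively_correlated M"
    and disjoint: "\<forall>i\<in>J. A i \<inter> B i = {}" "disjoint_family_on (\<lambda>i. A i \<union> B i) J"
    and meets: "\<forall>i\<in>J. \<forall>D\<in>set_pmf M \<inter> E i. D \<inter> A i \<noteq> {} \<and> D \<inter> B i \<noteq> {}"
  obtains C where "\<And>N. N \<subseteq> J \<Longrightarrow> finite N \<Longrightarrow> (\<Sum>i\<in>N. sqrt (measure_pmf.prob M (E i))) \<le> C"
proof -
  obtain C where C: "\<And>F. finite F \<Longrightarrow> sum (marginal M) F \<le> C"
    using negatively_correlated_marginal_sums_bounded[OF fin neg] by blast
  have "\<forall>i\<in>J. \<exists>F. F \<subseteq> A i \<union> B i \<and> finite F \<and> sqrt (measure_pmf.prob M (E i)) \<le> sum (marginal M) F"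
    using sqrt_prob_le_marginal_sum[OF fin neg] disjoint(1) meets by metis
  then obtain F where F: "\<And>i. i \<in> J \<Longrightarrow> F i \<subseteq> A i \<union> B i \<and> finite (F i)
      \<and> sqrt (measure_pmf.prob M (E i)) \<le> sum (marginal M) (F i)"
    by metis
  have "(\<Sum>i\<in>N. sqrt (measure_pmf.prob M (E i))) \<le> C" if "N \<subseteq> J" "finite N" for N
  proof -
    have "(\<Sum>i\<in>N. sqrt (measure_pmf.prob M (E i))) \<le> (\<Sum>i\<in>N. sum (marginal M) (F i))"
      using F that(1) by (intro sum_mono) auto
    also have "\<dots> = sum (marginal M) (\<Union>i\<in>N. F i)"
    proof (rule sum.UNION_disjoint[symmetric])
      show "finite N" by fact
      show "\<forall>i\<in>N. finite (F i)" using F that(1) by blast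
      show "\<forall>i\<in>N. \<forall>j\<in>N. i \<noteq> j \<longrightarrow> F i \<inter> F j = {}"
        using F that(1) disjoint(2) unfolding disjoint_family_on_def by blast
    qed
    also have "\<dots> \<le> C"
      using F that by (intro C) auto
    finally show ?thesis .
  qed
  then show ?thesis using that by blast
qed

section \<open>CQ-views of BID-PDBs\<close>

lemma BID_negatively_correlated:
  assumes "is_BID sch ar I"
  shows "negatively_correlated I"
proof (unfold negatively_correlated_def, intro allI impI)
  fix f g :: "('a, 'b) fact" assume "f \<noteq> g"
  obtain B where
    indep: "\<forall>fs. set fs \<subseteq> pdb_facts I \<and>
          (\<forall>i<length fs. \<forall>j<length fs. i \<noteq> j \<longrightarrow> \<not> (\<exists>X\<in>B. fs!i \<in> X \<and> fs!j \<in> X)) \<longrightarrow>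
          measure_pmf.prob I {D. set fs \<subseteq> D}
            = prod_list (map (\<lambda>f. measure_pmf.prob I {D. f \<in> D}) fs)" and
    excl: "\<forall>X\<in>B. \<forall>f\<in>X. \<forall>f'\<in>X. f \<noteq> f' \<longrightarrow> measure_pmf.prob I {D. f \<in> D \<and> f' \<in> D} = 0"
    using assms unfolding is_BID_def by blast
  consider "f \<notin> pdb_facts I \<or> g \<notin> pdb_facts I" | "\<exists>X\<in>B. f \<in> X \<and> g \<in> X"
    | "f \<in> pdb_facts I" "g \<in> pdb_facts I" "\<not> (\<exists>X\<in>B. f \<in> X \<and> g \<in> X)"
    by blast
  then have "measure_pmf.prob I {D. f \<in> D \<and> g \<in> D} = 0
      \<or> measure_pmf.prob I {D. f \<in> D \<and> g \<in> D} = marginal I f * marginal I g"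
  proof cases
    case 1
    then have "set_pmf I \<inter> {D. f \<in> D \<and> g \<in> D} = {}" unfolding pdb_facts_def by blast
    then show ?thesis by (simp add: measure_pmf_zero_iff)
  next
    case 2
    then show ?thesis using excl \<open>f \<noteq> g\<close> by blast
  next
    case 3
    have "\<forall>i<length [f, g]. \<forall>j<length [f, g]. i \<noteq> j \<longrightarrow> \<not> (\<exists>X\<in>B. [f, g] ! i \<in> X \<and> [f, g] ! j \<in> X)"
      using 3(3) by (auto simp: less_Suc_eq)
    moreover have "set [f, g] \<subseteq> pdb_facts I" using 3(1,2) by simp
    ultimately have "measure_pmf.prob I {D. set [f, g] \<subseteq> D}
        = prod_list (map (\<lambda>f. measure_pmf.prob I {D. f \<in> D}) [f, g])"
      using indep by blast
    moreover have "{D. set [f, g] \<subseteq> D} = {D. f \<in> D \<and> g \<in> D}" by auto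
    ultimately show ?thesis unfolding marginal_def by simp
  qed
  then show "measure_pmf.prob I {D. f \<in> D \<and> g \<in> D} \<le> marginal I f * marginal I g"
    using marginal_nonneg[of I f] marginal_nonneg[of I g] by auto
qed

lemma cq_view_E_anchored:
  assumes fv: "cq_fv \<Phi> \<subseteq> {0, 1}"
    and uw: "(u, w) \<in> cq_view_E \<Phi> D" and wu: "(w, u) \<in> cq_view_E \<Phi> D" and "u \<noteq> w"
    and no_loop: "(w, w) \<notin> cq_view_E \<Phi> D"
  shows "anchored \<Phi> 0"
proof -
  let ?Dom = "adom D \<union> cq_consts \<Phi>"
  let ?val = "\<lambda>a b. (\<lambda>_. undefined)(0 := a, 1 := b)"
  have sat: "cq_sat D ?Dom \<Phi> (?val u w)" "cq_sat D ?Dom \<Phi> (?val w u)" and "w \<in> ?Dom"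
    using uw wu unfolding cq_view_E_def by auto
  have "\<not> constant_var \<Phi> 0"
  proof
    assume "constant_var \<Phi> 0"
    then obtain c where c: "\<And>D Dom v. cq_sat D Dom \<Phi> v \<Longrightarrow> v 0 = c"
      unfolding constant_var_def by blast
    have "u = c" using c[OF sat(1)] by simp
    moreover have "w = c" using c[OF sat(2)] by simp
    ultimately show False using \<open>u \<noteq> w\<close> by simp
  qed
  moreover have "\<not> unconstrained \<Phi> 0"
  proof
    assume "unconstrained \<Phi> 0"
    then obtain Y where "0 \<in> Y" "resettable \<Phi> Y" unfolding unconstrained_def by blast
    then have "cq_sat D ?Dom \<Phi> (override_on (?val u w) (\<lambda>_. w) Y)"
      using resettableD[OF _ \<open>w \<in> ?Dom\<close> sat(1)] by blast
    moreover have "override_on (?val u w) (\<lambda>_. w) Y z = ?val w w z" if "z \<in> cq_fv \<Phi>" for z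
      using fv that \<open>0 \<in> Y\<close> by (auto simp: override_on_def)
    ultimately have "cq_sat D ?Dom \<Phi> (?val w w)"
      using cq_sat_cong[of \<Phi> "override_on (?val u w) (\<lambda>_. w) Y" "?val w w" D ?Dom] by blast
    then have "(w, w) \<in> cq_view_E \<Phi> D"
      using \<open>w \<in> ?Dom\<close> unfolding cq_view_E_def by simp
    then show False using no_loop by contradiction
  qed
  ultimately show ?thesis using anchored_or_constant_or_unconstrained[of \<Phi> 0] by blast
qed

lemma sqrt_edge_probs_bounded_if_anchored:
  assumes bid: "is_BID sch ar I" and "anchored \<Phi> 0"
    and "\<forall>i\<in>J. a i \<noteq> b i" and disj: "disjoint_family_on (\<lambda>i. {a i, b i}) J"
    and sym: "\<forall>i\<in>J. \<forall>D\<in>set_pmf I. (a i, b i) \<in> cq_view_E \<Phi> D \<longrightarrow> (b i, a i) \<in> cq_view_E \<Phi> D"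
  obtains C where "\<And>N. N \<subseteq> J \<Longrightarrow> finite N \<Longrightarrow>
    (\<Sum>i\<in>N. sqrt (measure_pmf.prob I {D. (a i, b i) \<in> cq_view_E \<Phi> D})) \<le> C"
proof -
  obtain p where p0: "\<forall>D Dom v. cq_sat D Dom \<Phi> v \<longrightarrow> D \<inter> facts_at p (v 0) \<noteq> {}"
    using \<open>anchored \<Phi> 0\<close> unfolding anchored_def by blast
  have p: "D \<inter> facts_at p u \<noteq> {}" if uw: "(u, w) \<in> cq_view_E \<Phi> D" for D u w
  proof -
    obtain Dom where "cq_sat D Dom \<Phi> ((\<lambda>_. undefined)(0 := u, 1 := w))"
      using uw unfolding cq_view_E_def by blast
    then show ?thesis using p0 by fastforce
  qed
  have "\<forall>D\<in>set_pmf I. finite D"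
    using bid unfolding is_BID_def is_pdb_def is_instance_def by blast
  moreover have "negatively_correlated I" using bid by (rule BID_negatively_correlated)
  moreover have "\<forall>i\<in>J. facts_at p (a i) \<inter> facts_at p (b i) = {}"
  proof
    fix i assume "i \<in> J"
    then show "facts_at p (a i) \<inter> facts_at p (b i) = {}"
      using \<open>\<forall>i\<in>J. a i \<noteq> b i\<close> disjoint_facts_at[of "{a i}" "{b i}" p] by simp
  qed
  moreover have "disjoint_family_on (\<lambda>i. facts_at p (a i) \<union> facts_at p (b i)) J"
  unfolding disjoint_family_on_def
  proof (intro ballI impI)
    fix i j assume "i \<in> J" "j \<in> J" "i \<noteq> j"
    then show "(facts_at p (a i) \<union> facts_at p (b i)) \<inter> (facts_at p (a j) \<union> facts_at p (b j)) = {}"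
      using disj disjoint_facts_at[of "{a i, b i}" "{a j, b j}" p]
      unfolding disjoint_family_on_def by simp
  qed
  moreover have "\<forall>i\<in>J. \<forall>D\<in>set_pmf I \<inter> {D. (a i, b i) \<in> cq_view_E \<Phi> D}.
      D \<inter> facts_at p (a i) \<noteq> {} \<and> D \<inter> facts_at p (b i) \<noteq> {}"
  proof (intro ballI conjI)
    fix i D assume "i \<in> J" and D: "D \<in> set_pmf I \<inter> {D. (a i, b i) \<in> cq_view_E \<Phi> D}"
    then show "D \<inter> facts_at p (a i) \<noteq> {}" using p by blast
    have "(b i, a i) \<in> cq_view_E \<Phi> D" using sym \<open>i \<in> J\<close> D by blast
    then show "D \<inter> facts_at p (b i) \<noteq> {}" by (rule p)
  qed
  ultimately obtain C where "\<And>N. N \<subseteq> J \<Longrightarrow> finite N \<Longrightarrow>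
      (\<Sum>i\<in>N. sqrt (measure_pmf.prob I {D. (a i, b i) \<in> cq_view_E \<Phi> D})) \<le> C"
    by (rule sqrt_pair_event_probs_bounded) blast
  then show ?thesis by (rule that)
qed

lemma edge_indep_graph_map_pmf_simple:
  assumes "edge_indep_graph (map_pmf G I)" and "D \<in> set_pmf I" and "(u, w) \<in> G D"
  shows "u \<noteq> w" and "(w, u) \<in> G D"
proof -
  have "G D \<in> set_pmf (map_pmf G I)" using assms(2) by simp
  then have "\<forall>(a, b)\<in>G D. a \<noteq> b \<and> (b, a) \<in> G D"
    using assms(1) unfolding edge_indep_graph_def by blast
  then show "u \<noteq> w" and "(w, u) \<in> G D" using assms(3) by auto
qed

lemma ex_harm_gt: "\<exists>n. harm n > (C :: real)"
proof -
  have "eventually (\<lambda>n. harm n > C) sequentially"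
    using harm_at_top by (simp add: filterlim_at_top_dense)
  then show ?thesis by (auto simp: eventually_sequentially)
qed

theorem lemma7p13:
  fixes a b :: "nat \<Rightarrow> 'u::{countable,infinite,linorder}"
    and D2 :: "('u \<times> 'u) set pmf"
  assumes two: "\<forall>i\<ge>1. a i \<noteq> b i"
    and disj: "\<forall>i\<ge>1. \<forall>j\<ge>1. i \<noteq> j \<longrightarrow> {a i, b i} \<inter> {a j, b j} = {}"
    and indep: "edge_indep_graph D2"
    and marg: "\<forall>i\<ge>1. measure_pmf.prob D2 {D. (a i, b i) \<in> D} = 1 / (real i)^2
                   \<and> measure_pmf.prob D2 {D. (b i, a i) \<in> D} = 1 / (real i)^2"
    and marg0: "\<forall>u v. (\<forall>i\<ge>1. (u, v) \<noteq> (a i, b i) \<and> (u, v) \<noteq> (b i, a i))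
                   \<longrightarrow> measure_pmf.prob D2 {D. (u, v) \<in> D} = 0"
  shows "\<not> (\<exists>(sch :: 'r set) (ar :: 'r \<Rightarrow> nat) (I :: ('r,'u) inst pmf) (\<Phi> :: ('r,'u) cq).
             finite sch \<and> is_BID sch ar I \<and> is_CQ_view_E sch ar \<Phi> \<and>
             map_pmf (cq_view_E \<Phi>) I = D2)"
proof
  assume "\<exists>(sch :: 'r set) (ar :: 'r \<Rightarrow> nat) (I :: ('r,'u) inst pmf) (\<Phi> :: ('r,'u) cq).
             finite sch \<and> is_BID sch ar I \<and> is_CQ_view_E sch ar \<Phi> \<and>
             map_pmf (cq_view_E \<Phi>) I = D2"
  then obtain sch ar and I :: "('r,'u) inst pmf" and \<Phi> :: "('r,'u) cq" where
    bid: "is_BID sch ar I" and view: "is_CQ_view_E sch ar \<Phi>" and img: "map_pmf (cq_view_E \<Phi>) I = D2"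
    by blast
  define E where "E i = {D. (a i, b i) \<in> cq_view_E \<Phi> D}" for i
  have prob_E: "measure_pmf.prob I (E i) = 1 / (real i)^2" if "i \<ge> 1" for i
    using marg that unfolding E_def img[symmetric] by (simp add: vimage_def)
  note simple = edge_indep_graph_map_pmf_simple[OF indep[folded img]]
  obtain D1 where "D1 \<in> set_pmf I" "(a 1, b 1) \<in> cq_view_E \<Phi> D1"
    using prob_E[of 1] measure_pmf_zero_iff[of I "E 1"] unfolding E_def by auto
  then have "anchored \<Phi> 0"
    using view simple unfolding is_CQ_view_E_def by (blast intro: cq_view_E_anchored)
  moreover have "\<forall>i\<in>{1..}. a i \<noteq> b i" using two by simp
  moreover have "disjoint_family_on (\<lambda>i. {a i, b i}) {1..}"
    using disj unfolding disjoint_family_on_def by simp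
  moreover have "\<forall>i\<in>{1..}. \<forall>D\<in>set_pmf I. (a i, b i) \<in> cq_view_E \<Phi> D \<longrightarrow> (b i, a i) \<in> cq_view_E \<Phi> D"
    using simple(2) by blast
  ultimately obtain C where C: "\<And>N. N \<subseteq> {1..} \<Longrightarrow> finite N \<Longrightarrow>
      (\<Sum>i\<in>N. sqrt (measure_pmf.prob I (E i))) \<le> C"
    unfolding E_def by (rule sqrt_edge_probs_bounded_if_anchored[OF bid]) blast
  have "harm n \<le> C" for n
  proof -
    have "harm n = (\<Sum>i\<in>{1..n}. sqrt (measure_pmf.prob I (E i)))"
      unfolding harm_def using prob_E by (intro sum.cong) (auto simp: real_sqrt_divide inverse_eq_divide)
    then show ?thesis using C[of "{1..n}"] by auto
  qed
  then show False using ex_harm_gt[of C] by (simp add: not_less[symmetric])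
qed

end
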